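(* Fix a resource block $n$. Let $\mathcal K=\{1,\dots,K\}$, and for each $k\in\mathcal K$ let $M^{(k)}\ge 1$ be an integer and $\tilde{\mathcal K}^{(k)}\subseteq\mathcal K\setminus\{k\}$ a set with $|\tilde{\mathcal K}^{(k)}|=\tilde K$ for all $k$. Let $w^{(k)}_m, r^{(k)}_{m,n}, \tilde r^{(k,\tilde k)}_{m,n}$ be arbitrary real coefficients. Consider the linear program in the variables $x^{(k)}_{m,n}$ ($k\in\mathcal K$, $m\in\{1,\dots,M^{(k)}\}$), $y^{(k,\tilde k)}_{m,n}$ ($k\in\mathcal K$, $\tilde k\in\tilde{\mathcal K}^{(k)}$, $m\in\{1,\dots,M^{(k)}\}$) and $I^{(k)}_n$ ($k\in\mathcal K$): $$\max\ \sum_{k=1}^K\sum_{m=1}^{M^{(k)}} w^{(k)}_m\Big(x^{(k)}_{m,n}r^{(k)}_{m,n}+\sum_{\tilde k\in\tilde{\mathcal K}^{(k)}} y^{(k,\tilde k)}_{m,n}\tilde r^{(k,\tilde k)}_{m,n}\Big)$$ subject to $\sum_{m=1}^{M^{(k)}}x^{(k)}_{m,n}=1-I^{(k)}_n$ for all $k$; $\sum_{\tilde k\in\tilde{\mathcal K}^{(k)}}y^{(k,\tilde k)}_{m,n}\le x^{(k)}_{m,n}$ for all $k,m$; $\sum_{m=1}^{M^{(k)}}y^{(k,\tilde k)}_{m,n}\le I^{(\tilde k)}_n$ for all $k$ and $\tilde k\in\tilde{\mathcal K}^{(k)}$; and $x^{(k)}_{m,n},y^{(k,\tilde k)}_{m,n},I^{(k)}_n\in[0,1]$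 for all indices. Then at every optimal vertex (basic optimal solution) of this linear program, the percentage of variables taking a value in $\{0,1\}$ is at least $$\frac{\tilde K(\bar M-1)}{(\tilde K+1)\bar M+1}\cdot 100\%,\qquad \bar M=\frac1K\sum_{k=1}^K M^{(k)}.$$
   Context: This linear program is the relaxation (binary constraints replaced by $[0,1]$ bounds) of a binary linear program for weighted sum-rate maximization with resource-block blanking in a $K$-sector cellular network: $x^{(k)}_{m,n}$ indicates assignment of resource block $n$ to user $m$ in sector $k$, $I^{(k)}_n$ indicates that block $n$ is blanked in sector $k$, and $y^{(k,\tilde k)}_{m,n}$ are auxiliary variables. $\tilde K$ is the common number of neighboring interfering sectors per sector and $\bar M$ the average number of users per sector. *)

theory Defs
  imports "HOL-Analysis.Analysis"
begin

text \<open>Variables of the LP for a fixed resource block n: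
  XV k m   stands for x^(k)_{m,n},
  YV k kt m stands for y^(k,kt)_{m,n},
  IV k     stands for I^(k)_n.\<close>
datatype lpvar = XV nat nat | YV nat nat nat | IV nat

definition lp_vars :: "nat \<Rightarrow> (nat \<Rightarrow> nat) \<Rightarrow> (nat \<Rightarrow> nat set) \<Rightarrow> lpvar set" where
  "lp_vars K M Kt =
     {XV k m | k m. k \<in> {1..K} \<and> m \<in> {1..M k}}
   \<union> {YV k kt m | k kt m. k \<in> {1..K} \<and> kt \<in> Kt k \<and> m \<in> {1..M k}}
   \<union> {IV k | k. k \<in> {1..K}}"

text \<open>Feasible set of the LP relaxation. A point is a function from variables to reals;
  coordinates outside lp_vars are pinned to 0 so that they play no role.\<close>
definition lp_feasible :: "nat \<Rightarrow> (nat \<Rightarrow> nat) \<Rightarrow> (nat \<Rightarrow> nat set) \<Rightarrow> (lpvar \<Rightarrow> real) set" where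
  "lp_feasible K M Kt = {v.
     (\<forall>u. u \<notin> lp_vars K M Kt \<longrightarrow> v u = 0)
   \<and> (\<forall>u \<in> lp_vars K M Kt. 0 \<le> v u \<and> v u \<le> 1)
   \<and> (\<forall>k \<in> {1..K}. (\<Sum>m = 1..M k. v (XV k m)) = 1 - v (IV k))
   \<and> (\<forall>k \<in> {1..K}. \<forall>m \<in> {1..M k}. (\<Sum>kt \<in> Kt k. v (YV k kt m)) \<le> v (XV k m))
   \<and> (\<forall>k \<in> {1..K}. \<forall>kt \<in> Kt k. (\<Sum>m = 1..M k. v (YV k kt m)) \<le> v (IV kt))}"

definition lp_objective ::
  "nat \<Rightarrow> (nat \<Rightarrow> nat) \<Rightarrow> (nat \<Rightarrow> nat set) \<Rightarrow> (nat \<Rightarrow> nat \<Rightarrow> real) \<Rightarrow>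
   (nat \<Rightarrow> nat \<Rightarrow> real) \<Rightarrow> (nat \<Rightarrow> nat \<Rightarrow> nat \<Rightarrow> real) \<Rightarrow> (lpvar \<Rightarrow> real) \<Rightarrow> real" where
  "lp_objective K M Kt w r rt v =
     (\<Sum>k = 1..K. \<Sum>m = 1..M k. w k m *
        (v (XV k m) * r k m + (\<Sum>kt \<in> Kt k. v (YV k kt m) * rt k kt m)))"

text \<open>Vertex (extreme point) of a set of points, written out as the library notion
  extreme_point_of unfolds (function spaces are not a real_vector instance).\<close>
definition is_vertex :: "(lpvar \<Rightarrow> real) \<Rightarrow> (lpvar \<Rightarrow> real) set \<Rightarrow> bool" where
  "is_vertex v P \<longleftrightarrow> v \<in> P \<and>
     \<not> (\<exists>a \<in> P. \<exists>b \<in> P. a \<noteq> b \<and> (\<exists>t::real. 0 < t \<and> t < 1 \<and> v = (\<lambda>u. (1 - t) * a u + t * b u)))"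

end

theory Submission
  imports Defs
begin

text \<open>
  Proposition 1 is a counting argument about vertices of a polytope given by linear
  constraints and box constraints 0 \<le> x \<le> 1.  Call a coordinate of a vertex v fractional
  if it lies strictly between 0 and 1.  If v had more fractional coordinates than the LP has
  constraint rows, a nonzero direction d supported on these coordinates would annihilate every
  row (a homogeneous linear system with more unknowns than equations); a small step along d in
  both directions then stays feasible, contradicting that v is a vertex.

  Finally variables
  and rows are counted: there are S + Ktil*S + K variables but at most K + S + K*Ktil rows,
  where S is the total number of users, so at least Ktil*(S - K) coordinates are 0 or 1.
\<close>

text \<open>Gaussian elimination step: a solution of the system obtained by eliminating the variable
  u0 with the pivot row r extends to a solution of the system with row r added.\<close>
lemma eliminate_variable:
  fixes A :: "'r \<Rightarrow> 'v \<Rightarrow> real"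
  assumes F: "finite F" "u0 \<in> F" and pivot: "A r u0 \<noteq> 0"
    and reduced: "\<forall>s\<in>R. (\<Sum>u\<in>F - {u0}. c u * (A s u - A s u0 * A r u / A r u0)) = 0"
  defines "c' \<equiv> c(u0 := - (\<Sum>u\<in>F - {u0}. c u * A r u) / A r u0)"
  shows "\<forall>s\<in>insert r R. (\<Sum>u\<in>F. c' u * A s u) = 0"
proof
  fix s assume s: "s \<in> insert r R"
  have "(\<Sum>u\<in>F. c' u * A s u) = c' u0 * A s u0 + (\<Sum>u\<in>F - {u0}. c' u * A s u)"
    using F by (rule sum.remove)
  also have "(\<Sum>u\<in>F - {u0}. c' u * A s u) = (\<Sum>u\<in>F - {u0}. c u * A s u)"
    by (rule sum.cong) (simp_all add: c'_def)
  finally have split: "(\<Sum>u\<in>F. c' u * A s u) = c' u0 * A s u0 + (\<Sum>u\<in>F - {u0}. c u * A s u)" .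
  show "(\<Sum>u\<in>F. c' u * A s u) = 0"
  proof (cases "s = r")
    case True
    then show ?thesis using pivot unfolding split by (simp add: c'_def)
  next
    case False
    with s reduced have "(\<Sum>u\<in>F - {u0}. c u * (A s u - A s u0 * A r u / A r u0)) = 0" by blast
    moreover have "(\<Sum>u\<in>F - {u0}. c u * (A s u - A s u0 * A r u / A r u0))
        = (\<Sum>u\<in>F - {u0}. c u * A s u) - A s u0 / A r u0 * (\<Sum>u\<in>F - {u0}. c u * A r u)"
      unfolding right_diff_distrib sum_subtractf sum_distrib_left
      by (simp add: ac_simps)
    ultimately have "(\<Sum>u\<in>F - {u0}. c u * A s u) = - c' u0 * A s u0"
      by (simp add: c'_def)
    then show ?thesis unfolding split by simp
  qed
qed

lemma homogeneous_system_nontrivial_solution: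
  fixes A :: "'r \<Rightarrow> 'v \<Rightarrow> real"
  assumes "finite R" and "finite F" and "card R < card F"
  shows "\<exists>c. (\<exists>u\<in>F. c u \<noteq> 0) \<and> (\<forall>s\<in>R. (\<Sum>u\<in>F. c u * A s u) = 0)"
  using assms
proof (induction R arbitrary: F A rule: finite_induct)
  case empty
  then obtain u where "u \<in> F" by fastforce
  then show ?case by (intro exI[of _ "\<lambda>_. 1"]) auto
next
  case (insert r R)
  show ?case
  proof (cases "\<forall>u\<in>F. A r u = 0")
    case True
    have "card R < card F" using insert.hyps insert.prems(2) by simp
    then obtain c where "\<exists>u\<in>F. c u \<noteq> 0" "\<forall>s\<in>R. (\<Sum>u\<in>F. c u * A s u) = 0"
      using insert.IH[of F A] \<open>finite F\<close> by blast
    with True show ?thesis by auto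
  next
    case False
    then obtain u0 where u0: "u0 \<in> F" "A r u0 \<noteq> 0" by blast
    have "card (insert r R) = Suc (card R)" using insert.hyps by simp
    moreover have "card (F - {u0}) = card F - 1" using \<open>finite F\<close> u0(1) by simp
    ultimately have "card R < card (F - {u0})" using insert.prems(2) by linarith
    then obtain c
      where c: "\<exists>u\<in>F - {u0}. c u \<noteq> 0"
        and red: "\<forall>s\<in>R. (\<Sum>u\<in>F - {u0}. c u * (A s u - A s u0 * A r u / A r u0)) = 0"
      using insert.IH[of "F - {u0}" "\<lambda>s u. A s u - A s u0 * A r u / A r u0"] \<open>finite F\<close> by blast
    let ?c' = "c(u0 := - (\<Sum>u\<in>F - {u0}. c u * A r u) / A r u0)"
    have "\<forall>s\<in>insert r R. (\<Sum>u\<in>F. ?c' u * A s u) = 0"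
      using eliminate_variable[OF \<open>finite F\<close> u0 red] .
    moreover have "\<exists>u\<in>F. ?c' u \<noteq> 0" using c by auto
    ultimately show ?thesis by blast
  qed
qed

lemma small_step_in_box:
  fixes v c :: "'a \<Rightarrow> real"
  assumes "finite F" and "\<forall>u\<in>F. 0 < v u \<and> v u < 1"
  shows "\<exists>\<epsilon>>0. \<forall>t. \<bar>t\<bar> \<le> \<epsilon> \<longrightarrow> (\<forall>u\<in>F. 0 \<le> v u + t * c u \<and> v u + t * c u \<le> 1)"
proof -
  have "\<forall>\<^sub>F t in nhds 0. 0 < v u + t * c u \<and> v u + t * c u < 1" if "u \<in> F" for u
  proof -
    have "((\<lambda>t. v u + t * c u) \<longlongrightarrow> v u + 0 * c u) (nhds 0)"
      by (intro tendsto_intros filterlim_ident)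
    then have "((\<lambda>t. v u + t * c u) \<longlongrightarrow> v u) (nhds 0)" by simp
    moreover have "0 < v u" "v u < 1" using assms(2) that by auto
    ultimately show ?thesis
      by (intro eventually_conj order_tendstoD)
  qed
  then have "\<forall>\<^sub>F t in nhds 0. \<forall>u\<in>F. 0 < v u + t * c u \<and> v u + t * c u < 1"
    using assms(1) by (simp add: eventually_ball_finite)
  then obtain e where "e > 0" and e: "\<And>t. dist t 0 < e \<Longrightarrow> \<forall>u\<in>F. 0 < v u + t * c u \<and> v u + t * c u < 1"
    unfolding eventually_nhds_metric by blast
  then show ?thesis
    by (intro exI[of _ "e / 2"]) (auto dest!: e simp: less_imp_le)
qed

text \<open>A vertex admits no direction d along which it can be moved both ways inside the set:
  v would be the midpoint of the two distinct points v + d and v - d.\<close>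
lemma is_vertex_no_two_sided_direction:
  assumes "is_vertex v P" and "(\<lambda>u. v u + d u) \<in> P" and "(\<lambda>u. v u - d u) \<in> P"
  shows "d = (\<lambda>_. 0)"
proof (rule ccontr)
  assume "d \<noteq> (\<lambda>_. 0)"
  then have "(\<lambda>u. v u + d u) \<noteq> (\<lambda>u. v u - d u)" by (auto simp: fun_eq_iff)
  moreover have "\<exists>t::real. 0 < t \<and> t < 1 \<and> v = (\<lambda>u. (1 - t) * (v u + d u) + t * (v u - d u))"
    by (intro exI[of _ "1/2"]) (simp add: fun_eq_iff field_simps)
  ultimately show False
    using assms unfolding is_vertex_def by blast
qed

text \<open>The constraint rows of the LP, as linear forms in a direction d: the assignment
  equality of sector k, the user coupling row (k,m) and the blanking row (k,kt).\<close>
datatype lp_row = RowAssign nat | RowUser nat nat | RowBlank nat nat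

fun row_form :: "(nat \<Rightarrow> nat) \<Rightarrow> (nat \<Rightarrow> nat set) \<Rightarrow> lp_row \<Rightarrow> (lpvar \<Rightarrow> real) \<Rightarrow> real" where
  "row_form M Kt (RowAssign k) d = (\<Sum>m = 1..M k. d (XV k m)) + d (IV k)"
| "row_form M Kt (RowUser k m) d = (\<Sum>kt \<in> Kt k. d (YV k kt m)) - d (XV k m)"
| "row_form M Kt (RowBlank k kt) d = (\<Sum>m = 1..M k. d (YV k kt m)) - d (IV kt)"

definition lp_rows :: "nat \<Rightarrow> (nat \<Rightarrow> nat) \<Rightarrow> (nat \<Rightarrow> nat set) \<Rightarrow> lp_row set" where
  "lp_rows K M Kt =
     {RowAssign k | k. k \<in> {1..K}}
   \<union> {RowUser k m | k m. k \<in> {1..K} \<and> m \<in> {1..M k}}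
   \<union> {RowBlank k kt | k kt. k \<in> {1..K} \<and> kt \<in> Kt k}"

text \<open>Each row form is linear in the direction; the coefficient of a variable u in row s is
  the value of s at the unit vector indicator {u}.\<close>
lemma row_form_sum:
  "row_form M Kt s (\<lambda>w. \<Sum>u\<in>F. c u * g u w) = (\<Sum>u\<in>F. c u * row_form M Kt s (g u))"
  by (cases s) (simp_all add: sum.swap[of _ F] sum_distrib_left sum.distrib sum_subtractf algebra_simps)

lemma row_form_scale: "row_form M Kt s (\<lambda>w. t * d w) = t * row_form M Kt s d"
  by (cases s) (simp_all add: sum_distrib_left algebra_simps)

lemma feasible_perturbation:
  assumes v: "v \<in> lp_feasible K M Kt"
    and d_support: "\<forall>u. u \<notin> lp_vars K M Kt \<longrightarrow> d u = 0"
    and box: "\<forall>u\<in>lp_vars K M Kt. 0 \<le> v u + d u \<and> v u + d u \<le> 1"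
    and rows: "\<forall>s\<in>lp_rows K M Kt. row_form M Kt s d = 0"
  shows "(\<lambda>u. v u + d u) \<in> lp_feasible K M Kt"
proof -
  have row_zero: "row_form M Kt s d = 0" if "s \<in> lp_rows K M Kt" for s
    using rows that by blast
  have assign: "(\<Sum>m = 1..M k. d (XV k m)) = - d (IV k)" if "k \<in> {1..K}" for k
    using row_zero[of "RowAssign k"] that unfolding lp_rows_def by auto
  have user: "(\<Sum>kt \<in> Kt k. d (YV k kt m)) = d (XV k m)" if "k \<in> {1..K}" "m \<in> {1..M k}" for k m
    using row_zero[of "RowUser k m"] that unfolding lp_rows_def by auto
  have blank: "(\<Sum>m = 1..M k. d (YV k kt m)) = d (IV kt)" if "k \<in> {1..K}" "kt \<in> Kt k" for k kt
    using row_zero[of "RowBlank k kt"] that unfolding lp_rows_def by auto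
  from v show ?thesis
    unfolding lp_feasible_def
  proof (intro CollectI conjI ballI allI impI; elim CollectE conjE)
    fix u assume "u \<notin> lp_vars K M Kt" "\<forall>u. u \<notin> lp_vars K M Kt \<longrightarrow> v u = 0"
    then show "v u + d u = 0" using d_support by simp
  next
    fix u assume "u \<in> lp_vars K M Kt"
    then show "0 \<le> v u + d u" "v u + d u \<le> 1" using box by auto
  next
    fix k assume "k \<in> {1..K}" "\<forall>k\<in>{1..K}. (\<Sum>m = 1..M k. v (XV k m)) = 1 - v (IV k)"
    then show "(\<Sum>m = 1..M k. v (XV k m) + d (XV k m)) = 1 - (v (IV k) + d (IV k))"
      using assign[of k] by (simp add: sum.distrib)
  next
    fix k m assume "k \<in> {1..K}" "m \<in> {1..M k}"
      "\<forall>k\<in>{1..K}. \<forall>m\<in>{1..M k}. (\<Sum>kt\<in>Kt k. v (YV k kt m)) \<le> v (XV k m)"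
    then show "(\<Sum>kt\<in>Kt k. v (YV k kt m) + d (YV k kt m)) \<le> v (XV k m) + d (XV k m)"
      using user[of k m] by (simp add: sum.distrib)
  next
    fix k kt assume "k \<in> {1..K}" "kt \<in> Kt k"
      "\<forall>k\<in>{1..K}. \<forall>kt\<in>Kt k. (\<Sum>m = 1..M k. v (YV k kt m)) \<le> v (IV kt)"
    then show "(\<Sum>m = 1..M k. v (YV k kt m) + d (YV k kt m)) \<le> v (IV kt) + d (IV kt)"
      using blank[of k kt] by (simp add: sum.distrib)
  qed
qed

text \<open>Every vertex has at most as many fractional coordinates as the LP has rows:
  otherwise a nonzero direction supported on the fractional coordinates annihilates all
  rows, and a small step along it in both directions stays feasible.\<close>
lemma vertex_fractional_le_rows:
  assumes vertex: "is_vertex v (lp_feasible K M Kt)"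
    and finite_rows: "finite (lp_rows K M Kt)" and finite_vars: "finite (lp_vars K M Kt)"
  shows "card {u \<in> lp_vars K M Kt. \<not> (v u = 0 \<or> v u = 1)} \<le> card (lp_rows K M Kt)"
proof (rule ccontr)
  define F where "F = {u \<in> lp_vars K M Kt. \<not> (v u = 0 \<or> v u = 1)}"
  assume "\<not> card {u \<in> lp_vars K M Kt. \<not> (v u = 0 \<or> v u = 1)} \<le> card (lp_rows K M Kt)"
  then have more_unknowns: "card (lp_rows K M Kt) < card F" unfolding F_def by simp
  have "finite F" using finite_vars unfolding F_def by simp
  obtain c where c_nonzero: "\<exists>u\<in>F. c u \<noteq> 0"
    and c_rows: "\<forall>s\<in>lp_rows K M Kt. (\<Sum>u\<in>F. c u * row_form M Kt s (indicator {u})) = 0"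
    using homogeneous_system_nontrivial_solution[OF finite_rows \<open>finite F\<close> more_unknowns,
        where A = "\<lambda>s u. row_form M Kt s (indicator {u})"] by blast
  define d where "d w = (if w \<in> F then c w else 0)" for w
  have d_expand: "(\<lambda>w. \<Sum>u\<in>F. c u * indicator {u} w) = d"
    using \<open>finite F\<close> by (auto simp: fun_eq_iff d_def indicator_def if_distrib sum.delta cong: if_cong)
  have d_rows: "\<forall>s\<in>lp_rows K M Kt. row_form M Kt s d = 0"
    using c_rows row_form_sum[where F = F and c = c and g = "\<lambda>u. indicator {u}"] by (simp add: d_expand)
  have v_feasible: "v \<in> lp_feasible K M Kt" using vertex unfolding is_vertex_def by simp
  then have v_box: "\<forall>u\<in>lp_vars K M Kt. 0 \<le> v u \<and> v u \<le> 1" unfolding lp_feasible_def by blast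
  then have "\<forall>u\<in>F. 0 < v u \<and> v u < 1" unfolding F_def by force
  then obtain \<epsilon> where "\<epsilon> > 0"
    and \<epsilon>_box: "\<And>t. \<bar>t\<bar> \<le> \<epsilon> \<Longrightarrow> \<forall>u\<in>F. 0 \<le> v u + t * c u \<and> v u + t * c u \<le> 1"
    using small_step_in_box[OF \<open>finite F\<close>] by blast
  have step_feasible: "(\<lambda>u. v u + t * d u) \<in> lp_feasible K M Kt" if "\<bar>t\<bar> = \<epsilon>" for t
  proof (rule feasible_perturbation[OF v_feasible])
    show "\<forall>u. u \<notin> lp_vars K M Kt \<longrightarrow> t * d u = 0" unfolding d_def F_def by auto
    show "\<forall>u\<in>lp_vars K M Kt. 0 \<le> v u + t * d u \<and> v u + t * d u \<le> 1"
      using \<epsilon>_box[of t] v_box that unfolding d_def by auto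
    show "\<forall>s\<in>lp_rows K M Kt. row_form M Kt s (\<lambda>u. t * d u) = 0"
      using d_rows by (simp add: row_form_scale)
  qed
  have "(\<lambda>u. \<epsilon> * d u) = (\<lambda>_. 0)"
    using is_vertex_no_two_sided_direction[OF vertex] step_feasible[of \<epsilon>] step_feasible[of "- \<epsilon>"]
      \<open>\<epsilon> > 0\<close> by simp
  then show False using c_nonzero \<open>\<epsilon> > 0\<close> by (metis d_def mult_eq_0_iff less_irrefl)
qed

lemma lp_vars_finite_card:
  assumes Kt: "\<forall>k\<in>{1..K}. finite (Kt k) \<and> card (Kt k) = Ktil"
  shows "finite (lp_vars K M Kt)"
    and "card (lp_vars K M Kt) = (\<Sum>k = 1..K. M k) + Ktil * (\<Sum>k = 1..K. M k) + K"
proof -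
  define X where "X = (\<lambda>(k, m). XV k m) ` Sigma {1..K} (\<lambda>k. {1..M k})"
  define Y where "Y = (\<lambda>(k, kt, m). YV k kt m) ` Sigma {1..K} (\<lambda>k. Kt k \<times> {1..M k})"
  define I where "I = IV ` {1..K}"
  have "{XV k m | k m. k \<in> {1..K} \<and> m \<in> {1..M k}} = X"
    unfolding X_def by (auto intro: rev_image_eqI)
  moreover have "{YV k kt m | k kt m. k \<in> {1..K} \<and> kt \<in> Kt k \<and> m \<in> {1..M k}} = Y"
    unfolding Y_def by (auto intro: rev_image_eqI[where x="(k, kt, m)" for k kt m])
  moreover have "{IV k | k. k \<in> {1..K}} = I"
    unfolding I_def by auto
  ultimately have vars: "lp_vars K M Kt = X \<union> Y \<union> I"
    unfolding lp_vars_def by simp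
  have finite: "finite X" "finite Y" "finite I"
    unfolding X_def Y_def I_def using Kt by auto
  have "card X = (\<Sum>k = 1..K. M k)"
    unfolding X_def by (subst card_image) (auto simp: inj_on_def card_SigmaI)
  moreover have "card Y = Ktil * (\<Sum>k = 1..K. M k)"
    unfolding Y_def using Kt
    by (subst card_image) (auto simp: inj_on_def card_SigmaI card_cartesian_product sum_distrib_left)
  moreover have "card I = K"
    unfolding I_def by (subst card_image) (auto simp: inj_on_def)
  moreover have "card (X \<union> Y \<union> I) = card X + card Y + card I"
  proof -
    have "X \<inter> Y = {}" "(X \<union> Y) \<inter> I = {}" unfolding X_def Y_def I_def by auto
    then show ?thesis using finite by (simp add: card_Un_disjoint)
  qed
  ultimately show "card (lp_vars K M Kt) = (\<Sum>k = 1..K. M k) + Ktil * (\<Sum>k = 1..K. M k) + K"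
    unfolding vars by simp
  show "finite (lp_vars K M Kt)" unfolding vars using finite by simp
qed

lemma lp_rows_finite_card:
  assumes Kt: "\<forall>k\<in>{1..K}. finite (Kt k) \<and> card (Kt k) = Ktil"
  shows "finite (lp_rows K M Kt)"
    and "card (lp_rows K M Kt) \<le> K + (\<Sum>k = 1..K. M k) + K * Ktil"
proof -
  have rows: "lp_rows K M Kt = RowAssign ` {1..K}
      \<union> (\<lambda>(k, m). RowUser k m) ` Sigma {1..K} (\<lambda>k. {1..M k})
      \<union> (\<lambda>(k, kt). RowBlank k kt) ` Sigma {1..K} Kt"
    unfolding lp_rows_def by (auto intro: rev_image_eqI[where x="(k, l)" for k l])
  have finite_blank: "finite (Sigma {1..K} Kt)" using Kt by auto
  then show "finite (lp_rows K M Kt)" unfolding rows by simp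
  have "card (lp_rows K M Kt) \<le> card (RowAssign ` {1..K})
        + card ((\<lambda>(k, m). RowUser k m) ` Sigma {1..K} (\<lambda>k. {1..M k}))
        + card ((\<lambda>(k, kt). RowBlank k kt) ` Sigma {1..K} Kt)"
    unfolding rows by (meson add_le_mono card_Un_le le_refl order_trans)
  also have "\<dots> \<le> card {1..K} + card (Sigma {1..K} (\<lambda>k. {1..M k})) + card (Sigma {1..K} Kt)"
    using finite_blank by (intro add_le_mono card_image_le) auto
  also have "\<dots> = K + (\<Sum>k = 1..K. M k) + K * Ktil"
    using Kt by (simp add: card_SigmaI)
  finally show "card (lp_rows K M Kt) \<le> K + (\<Sum>k = 1..K. M k) + K * Ktil" .
qed

lemma vertex_integral_count:
  assumes vertex: "is_vertex v (lp_feasible K M Kt)"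
    and Kt: "\<forall>k\<in>{1..K}. finite (Kt k) \<and> card (Kt k) = Ktil"
  shows "real Ktil * (\<Sum>k = 1..K. real (M k)) - real K * real Ktil
         \<le> real (card {u \<in> lp_vars K M Kt. v u = 0 \<or> v u = 1})"
proof -
  define V where "V = lp_vars K M Kt"
  note vars = lp_vars_finite_card[OF Kt, of M, folded V_def]
  note rows = lp_rows_finite_card[OF Kt, of M]
  have "card {u \<in> V. \<not> (v u = 0 \<or> v u = 1)} \<le> K + (\<Sum>k = 1..K. M k) + K * Ktil"
    using vertex_fractional_le_rows[OF vertex rows(1)] vars(1) rows(2) unfolding V_def by simp
  moreover have "card {u \<in> V. v u = 0 \<or> v u = 1} + card {u \<in> V. \<not> (v u = 0 \<or> v u = 1)} = card V"
    using vars(1) by (subst card_Un_disjoint[symmetric]) (auto intro: arg_cong[of _ _ card])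
  ultimately show ?thesis
    using vars(2) unfolding V_def by (simp add: of_nat_mult[symmetric] of_nat_sum[symmetric] del: of_nat_mult of_nat_sum)
qed

lemma percentage_bound_eq:
  fixes K S T :: real
  assumes "K > 0" "S \<ge> 0" "T \<ge> 0"
  shows "T * (S / K - 1) / ((T + 1) * (S / K) + 1) = (T * S - K * T) / (S + T * S + K)"
proof -
  have "(T + 1) * (S / K) + 1 = (S + T * S + K) / K" using assms by (simp add: field_simps)
  moreover have "T * (S / K - 1) = (T * S - K * T) / K" using assms by (simp add: field_simps)
  ultimately show ?thesis using assms by simp
qed

text \<open>Proposition 1.\<close>
theorem proposition1:
  fixes K Ktil :: nat and M :: "nat \<Rightarrow> nat" and Kt :: "nat \<Rightarrow> nat set"
    and w r :: "nat \<Rightarrow> nat \<Rightarrow> real" and rt :: "nat \<Rightarrow> nat \<Rightarrow> nat \<Rightarrow> real"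
    and v :: "lpvar \<Rightarrow> real"
  assumes K_pos: "K \<ge> 1"
    and M_pos: "\<forall>k \<in> {1..K}. M k \<ge> 1"
    and Kt_sub: "\<forall>k \<in> {1..K}. Kt k \<subseteq> {1..K} - {k}"
    and Kt_card: "\<forall>k \<in> {1..K}. card (Kt k) = Ktil"
    and vertex: "is_vertex v (lp_feasible K M Kt)"
    and optimal: "\<forall>u \<in> lp_feasible K M Kt.
                    lp_objective K M Kt w r rt u \<le> lp_objective K M Kt w r rt v"
  defines "Mbar \<equiv> (\<Sum>k = 1..K. real (M k)) / real K"
  shows "real (card {u \<in> lp_vars K M Kt. v u = 0 \<or> v u = 1}) / real (card (lp_vars K M Kt)) * 100
         \<ge> real Ktil * (Mbar - 1) / ((real Ktil + 1) * Mbar + 1) * 100"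
proof -
  define S where "S = (\<Sum>k = 1..K. real (M k))"
  define Z where "Z = card {u \<in> lp_vars K M Kt. v u = 0 \<or> v u = 1}"
  have Kt: "\<forall>k\<in>{1..K}. finite (Kt k) \<and> card (Kt k) = Ktil"
    using Kt_sub Kt_card by (meson finite_Diff finite_atLeastAtMost finite_subset)
  have vars: "real (card (lp_vars K M Kt)) = S + real Ktil * S + real K"
    using lp_vars_finite_card(2)[OF Kt, of M] unfolding S_def by simp
  have "real Ktil * (Mbar - 1) / ((real Ktil + 1) * Mbar + 1)
      = (real Ktil * S - real K * real Ktil) / real (card (lp_vars K M Kt))"
    using percentage_bound_eq[of "real K" S "real Ktil"] K_pos unfolding vars Mbar_def S_def
    by (simp add: sum_nonneg)
  also have "\<dots> \<le> real Z / real (card (lp_vars K M Kt))"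
    using vertex_integral_count[OF vertex Kt] unfolding Z_def S_def by (simp add: divide_right_mono)
  finally show ?thesis unfolding Z_def by (intro mult_right_mono) auto
qed

end
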